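(* Let $p\ge 3$ be a prime and let $G$ be the Tanner graph of the array-based LDPC parity-check matrix $\mathbf{H}(3,p)$. Let $C_u$ be a set of $z$ check nodes with $1\le z\le p$, and let $W$ be the cluster-connecting set corresponding to $C_u$. Then: (a) $|W|\ge \dfrac{(1+2p)z-z^2}{4}$; (b) if all check nodes in $C_u$ belong to the same row group of $\mathbf{H}(3,p)$, then $|W|=zp$; (c) if $3\le z<p$ and every check node $c\in C_u$ lies on at least one cycle of length $6$ in $G$ whose other two check nodes also belong to $C_u$, then $|W|\le zp-z$.
   Context: For a prime $p$, let $\mathbf{I}$ be the $p\times p$ identity matrix and let $\sigma^{s}$ denote the $p\times p$ circulant permutation matrix obtained by cyclically left-shifting the entries of $\mathbf{I}$ by $s \pmod p$ positions ($\sigma^0=\mathbf{I}$). The array-based LDPC matrix $\mathbf{H}(3,p)$ is the $3p\times p^2$ binary block matrix whose $(r,t)$ block, $r\in\{0,1,2\}$, $t\in\{0,\dots,p-1\}$, is $\sigma^{rt}$. Its $r$-th block row (the $p$ rows of blocks $\sigma^{r\cdot 0},\dots,\sigma^{r(p-1)}$) is called row group $r$. Its Tanner graph $G=(V\cup C,E)$ is the bipartite graph with a variable node for each column, a check node for each row, and an edge for each entry equal to $1$. For $C_u\subseteq C$ let $\bar C_u=C\setminus C_u$, let $\mathcal{N}_V(C_u)$ be the set of variable nodes adjacent to some node of $C_u$, and for a variable node $x$ and $D\subseteq C$ let $\mathcal{N}_D(x)$ be the set of neighbors of $x$ in $D$. The cluster-connecting set (CCS) corresponding to $C_u$ is the set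 $W\subseteq \mathcal{N}_V(C_u)$ defined by: $x\in W$ if and only if $\mathcal{N}_{C_u}(x)\neq\emptyset$ and $\mathcal{N}_{\bar C_u}(x)\neq\emptyset$. *)

theory Defs
  imports Complex_Main "HOL-Computational_Algebra.Primes"
begin

text \<open>Check node (r,i): row i (0 \<le> i < p) of row group r (0 \<le> r < 3).
  Variable node (t,j): column j (0 \<le> j < p) of column block t (0 \<le> t < p).
  Block (r,t) is sigma^(r t), the identity cyclically left-shifted by r t positions:
  row i of sigma^s has its 1 in column (i - s) mod p, i.e. entry (i,j) is 1 iff (j + s) mod p = i.\<close>

definition checks :: "nat \<Rightarrow> (nat \<times> nat) set" where
  "checks p = {(r, i). r < 3 \<and> i < p}"

definition vars :: "nat \<Rightarrow> (nat \<times> nat) set" where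
  "vars p = {(t, j). t < p \<and> j < p}"

definition adj :: "nat \<Rightarrow> nat \<times> nat \<Rightarrow> nat \<times> nat \<Rightarrow> bool" where
  "adj p c x = (c \<in> checks p \<and> x \<in> vars p \<and> (snd x + fst c * fst x) mod p = snd c)"

definition NV :: "nat \<Rightarrow> (nat \<times> nat) set \<Rightarrow> (nat \<times> nat) set" where
  "NV p Cu = {x \<in> vars p. \<exists>c \<in> Cu. adj p c x}"

definition ND :: "nat \<Rightarrow> (nat \<times> nat) set \<Rightarrow> nat \<times> nat \<Rightarrow> (nat \<times> nat) set" where
  "ND p D x = {c \<in> D. adj p c x}"

definition CCS :: "nat \<Rightarrow> (nat \<times> nat) set \<Rightarrow> (nat \<times> nat) set" where
  "CCS p Cu = {x \<in> NV p Cu. ND p Cu x \<noteq> {} \<and> ND p (checks p - Cu) x \<noteq> {}}"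

definition cycle6 :: "nat \<Rightarrow> nat \<times> nat \<Rightarrow> nat \<times> nat \<Rightarrow> nat \<times> nat \<Rightarrow> bool" where
  "cycle6 p c1 c2 c3 = (c1 \<noteq> c2 \<and> c2 \<noteq> c3 \<and> c1 \<noteq> c3 \<and>
     (\<exists>v1 v2 v3. v1 \<noteq> v2 \<and> v2 \<noteq> v3 \<and> v1 \<noteq> v3 \<and>
        adj p c1 v1 \<and> adj p c2 v1 \<and> adj p c2 v2 \<and> adj p c3 v2 \<and>
        adj p c3 v3 \<and> adj p c1 v3))"

end

theory Submission
  imports Defs "HOL-Number_Theory.Cong"
begin

text \<open>Every variable node has exactly one neighbour in each of the three row groups, every check
  node has \<open>p\<close> neighbours, and, \<open>p\<close> being prime, two checks in different row groups share
  exactly one variable node (two lines with distinct slopes over \<open>\<int>/p\<close> meet once).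
  Writing \<open>k x\<close> for the number of neighbours of \<open>x\<close> in \<open>C\<^sub>u\<close>, the node \<open>x\<close> lies in \<open>W\<close> iff
  \<open>0 < k x < 3\<close>, and \<open>2 [0 < k < 3] + k (k - 1) = 2 k\<close> for \<open>k \<le> 3\<close>. Summing over all variable nodes
  gives \<open>2 |W| + Q = 2 z p\<close>, where \<open>Q\<close> counts the ordered pairs of checks of \<open>C\<^sub>u\<close> lying in different
  row groups. Now \<open>Q \<le> z (z - 1)\<close> gives (a), \<open>Q = 0\<close> gives (b), and the 6-cycle hypothesis gives
  every check two partners in other row groups, so \<open>Q \<ge> 2 z\<close> gives (c).\<close>

lemma cong_two_lines_unique:
  fixes p r r' t t' j j' :: int
  assumes "prime p" and "\<not> p dvd r - r'"
    and "[j + r * t = j' + r * t'] (mod p)" and "[j + r' * t = j' + r' * t'] (mod p)"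
  shows "[t = t'] (mod p) \<and> [j = j'] (mod p)"
proof -
  have "[(r - r') * t = (r - r') * t'] (mod p)"
    using cong_diff[OF assms(3,4)] by (simp add: algebra_simps)
  moreover have "coprime (r - r') p"
    using prime_imp_coprime[OF assms(1,2)] by (simp add: ac_simps)
  ultimately have t: "[t = t'] (mod p)"
    by (simp add: cong_mult_lcancel)
  have "[j + r * t' = j + r * t] (mod p)"
    using cong_sym[OF t] by (intro cong_add cong_scalar_left) simp_all
  also note assms(3)
  finally show ?thesis
    using t by (simp add: cong_add_rcancel)
qed

lemma card_preimage_inj_endo:
  assumes "finite A" and "f ` A \<subseteq> A" and "inj_on f A"
  shows "card {x \<in> A. f x \<in> S} = card (A \<inter> S)"
proof -
  have "f ` {x \<in> A. f x \<in> S} = f ` A \<inter> S"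
    by blast
  also have "f ` A = A"
    using assms by (rule endo_inj_surj)
  finally have "f ` {x \<in> A. f x \<in> S} = A \<inter> S" .
  moreover have "inj_on f {x \<in> A. f x \<in> S}"
    using assms(3) by (rule inj_on_subset) blast
  ultimately show ?thesis
    using card_image by metis
qed

lemma card_Times_Diff_Id_on:
  assumes "finite A"
  shows "card (A \<times> A - Id_on A) = card A * (card A - 1)"
proof -
  have "Id_on A = (\<lambda>a. (a, a)) ` A"
    by (auto simp: Id_on_def)
  moreover have "inj_on (\<lambda>a. (a, a)) A"
    by (rule inj_onI) simp
  ultimately have "card (Id_on A) = card A"
    by (simp add: card_image)
  moreover have "finite (Id_on A)"
    using assms by (simp add: Id_on_def)
  ultimately show ?thesis
    by (simp add: card_Diff_subset Id_on_subset_Times card_cartesian_product diff_mult_distrib2)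
qed

lemma sum_card_filter_swap:
  assumes "finite A" and "finite B"
  shows "(\<Sum>x\<in>A. card {y \<in> B. R x y}) = (\<Sum>y\<in>B. card {x \<in> A. R x y})"
proof -
  have "card {y \<in> B. R x y} = (\<Sum>y\<in>B. of_bool (R x y))" for x
    using assms(2) by (simp add: Int_def)
  moreover have "card {x \<in> A. R x y} = (\<Sum>x\<in>A. of_bool (R x y))" for y
    using assms(1) by (simp add: Int_def)
  ultimately show ?thesis
    by (simp add: sum.swap[of _ A])
qed

definition row_crossing_pairs :: "('r \<times> 'i) set \<Rightarrow> (('r \<times> 'i) \<times> ('r \<times> 'i)) set" where
  "row_crossing_pairs Cu = {(c, c') \<in> Cu \<times> Cu. fst c \<noteq> fst c'}"

lemma card_row_crossing_pairs:
  assumes "finite Cu"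
  shows "card (row_crossing_pairs Cu) = (\<Sum>c\<in>Cu. card {c' \<in> Cu. fst c \<noteq> fst c'})"
proof -
  have "row_crossing_pairs Cu = (SIGMA c:Cu. {c' \<in> Cu. fst c \<noteq> fst c'})"
    by (auto simp: row_crossing_pairs_def)
  then show ?thesis
    using assms by simp
qed

lemma card_row_crossing_pairs_le:
  assumes "finite Cu"
  shows "card (row_crossing_pairs Cu) \<le> card Cu * (card Cu - 1)"
proof -
  have "card {c' \<in> Cu. fst c \<noteq> fst c'} \<le> card Cu - 1" if "c \<in> Cu" for c
  proof -
    have "{c' \<in> Cu. fst c \<noteq> fst c'} \<subseteq> Cu - {c}"
      by blast
    then have "card {c' \<in> Cu. fst c \<noteq> fst c'} \<le> card (Cu - {c})"
      using assms by (intro card_mono) simp_all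
    with that show ?thesis
      using assms by simp
  qed
  then have "(\<Sum>c\<in>Cu. card {c' \<in> Cu. fst c \<noteq> fst c'}) \<le> (\<Sum>c\<in>Cu. card Cu - 1)"
    by (rule sum_mono)
  then show ?thesis
    using assms by (simp add: card_row_crossing_pairs)
qed

lemma row_crossing_pairs_single_row:
  assumes "\<forall>c \<in> Cu. fst c = r"
  shows "row_crossing_pairs Cu = {}"
proof -
  from assms have "fst c = r" if "c \<in> Cu" for c
    using that by blast
  then show ?thesis
    by (auto simp: row_crossing_pairs_def)
qed

lemma adj_unique_in_row:
  assumes "adj p c x" and "adj p c' x" and "fst c = fst c'"
  shows "c = c'"
  using assms by (auto simp: adj_def prod_eq_iff)

lemma finite_vars [simp]: "finite (vars p)"
proof -
  have "vars p = {..<p} \<times> {..<p}"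
    by (auto simp: vars_def)
  then show ?thesis
    by simp
qed

lemma finite_checks [simp]: "finite (checks p)"
proof -
  have "checks p = {..<3} \<times> {..<p}"
    by (auto simp: checks_def)
  then show ?thesis
    by simp
qed

lemma finite_ND: "finite D \<Longrightarrow> finite (ND p D x)"
  by (simp add: ND_def)

lemma card_check_neighbours:
  assumes "c \<in> checks p"
  shows "card {x \<in> vars p. adj p c x} = p"
proof -
  obtain r i where c: "c = (r, i)"
    by (cases c)
  have "r < 3" "i < p"
    using assms by (simp_all add: c checks_def)
  define f where "f x = (fst x, (snd x + r * fst x) mod p)" for x :: "nat \<times> nat"
  have inj: "inj_on f (vars p)"
  proof (rule inj_onI)
    fix x y assume x: "x \<in> vars p" and y: "y \<in> vars p" and "f x = f y"
    then have t: "fst x = fst y"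
      by (simp add: f_def)
    have "[snd x + r * fst y = snd y + r * fst y] (mod p)"
      using \<open>f x = f y\<close> t unfolding f_def cong_def by auto
    then have "[snd x = snd y] (mod p)"
      by (simp only: cong_add_rcancel_nat)
    with x y have "snd x = snd y"
      by (intro cong_less_imp_eq_nat) (auto simp: vars_def)
    with t show "x = y"
      by (simp add: prod_eq_iff)
  qed
  have endo: "f ` vars p \<subseteq> vars p"
    using \<open>i < p\<close> by (auto simp: f_def vars_def)
  have "{x \<in> vars p. adj p c x} = {x \<in> vars p. f x \<in> UNIV \<times> {i}}"
    using \<open>r < 3\<close> \<open>i < p\<close> by (auto simp: c adj_def checks_def f_def)
  then have "card {x \<in> vars p. adj p c x} = card (vars p \<inter> UNIV \<times> {i})"
    using card_preimage_inj_endo[OF finite_vars endo inj] by (simp only:)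
  also have "vars p \<inter> UNIV \<times> {i} = {..<p} \<times> {i}"
    using \<open>i < p\<close> by (auto simp: vars_def)
  finally show ?thesis
    by (simp add: card_cartesian_product)
qed

lemma card_common_neighbours:
  assumes "prime p" and "3 \<le> p" and "c \<in> checks p" and "c' \<in> checks p" and "fst c \<noteq> fst c'"
  shows "card {x \<in> vars p. adj p c x \<and> adj p c' x} = 1"
proof -
  obtain r i r' i' where c: "c = (r, i)" and c': "c' = (r', i')"
    by (cases c, cases c')
  have "r < 3" "r' < 3" "i < p" "i' < p" "r \<noteq> r'"
    using assms(3-5) by (simp_all add: c c' checks_def)
  define f where "f x = ((snd x + r * fst x) mod p, (snd x + r' * fst x) mod p)" for x :: "nat \<times> nat"
  \<comment> \<open>For \<open>p = 2\<close> the row groups 0 and 2 would coincide.\<close>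
  have "\<not> int p dvd int r - int r'"
  proof
    assume "int p dvd int r - int r'"
    then have "\<bar>int p\<bar> \<le> \<bar>int r - int r'\<bar>"
      using \<open>r \<noteq> r'\<close> by (intro dvd_imp_le_int) simp_all
    with \<open>r < 3\<close> \<open>r' < 3\<close> \<open>3 \<le> p\<close> show False
      by linarith
  qed
  have inj: "inj_on f (vars p)"
  proof (rule inj_onI)
    fix x y assume x: "x \<in> vars p" and y: "y \<in> vars p" and "f x = f y"
    have "[snd x + r * fst x = snd y + r * fst y] (mod p)"
      and "[snd x + r' * fst x = snd y + r' * fst y] (mod p)"
      using \<open>f x = f y\<close> unfolding f_def cong_def by simp_all
    then have "[int (snd x) + int r * int (fst x) = int (snd y) + int r * int (fst y)] (mod int p)"
      and "[int (snd x) + int r' * int (fst x) = int (snd y) + int r' * int (fst y)] (mod int p)"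
      unfolding cong_int_iff [symmetric] by simp_all
    then have "[int (fst x) = int (fst y)] (mod int p) \<and> [int (snd x) = int (snd y)] (mod int p)"
      using \<open>prime p\<close> \<open>\<not> int p dvd int r - int r'\<close>
      by (intro cong_two_lines_unique[where r = "int r" and r' = "int r'"]) simp_all
    then have "fst x = fst y" and "snd x = snd y"
      using x y by (auto simp: vars_def cong_int_iff intro: cong_less_imp_eq_nat)
    then show "x = y"
      by (simp add: prod_eq_iff)
  qed
  have endo: "f ` vars p \<subseteq> vars p"
    using \<open>3 \<le> p\<close> by (auto simp: f_def vars_def)
  have "{x \<in> vars p. adj p c x \<and> adj p c' x} = {x \<in> vars p. f x \<in> {(i, i')}}"
    using \<open>r < 3\<close> \<open>r' < 3\<close> \<open>i < p\<close> \<open>i' < p\<close> by (auto simp: c c' adj_def checks_def f_def)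
  then have "card {x \<in> vars p. adj p c x \<and> adj p c' x} = card (vars p \<inter> {(i, i')})"
    using card_preimage_inj_endo[OF finite_vars endo inj] by (simp only:)
  also have "vars p \<inter> {(i, i')} = {(i, i')}"
    using \<open>i < p\<close> \<open>i' < p\<close> by (auto simp: vars_def)
  finally show ?thesis
    by simp
qed

lemma card_variable_neighbours:
  assumes "0 < p" and "x \<in> vars p"
  shows "card (ND p (checks p) x) = 3"
proof -
  define nb where "nb r = (r, (snd x + r * fst x) mod p)" for r
  have "ND p (checks p) x = nb ` {..<3}"
  proof (intro set_eqI iffI)
    fix c assume "c \<in> ND p (checks p) x"
    then have "fst c < 3" and "c = nb (fst c)"
      by (auto simp: ND_def adj_def checks_def nb_def prod_eq_iff)
    then show "c \<in> nb ` {..<3}"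
      by blast
  next
    fix c assume "c \<in> nb ` {..<3}"
    with assms show "c \<in> ND p (checks p) x"
      by (auto simp: ND_def adj_def checks_def nb_def)
  qed
  moreover have "inj nb"
    by (rule injI) (simp add: nb_def)
  ultimately show ?thesis
    by (simp add: card_image inj_on_subset)
qed

lemma card_ND_le_3:
  assumes "0 < p" and "x \<in> vars p" and "Cu \<subseteq> checks p"
  shows "card (ND p Cu x) \<le> 3"
proof -
  have "ND p Cu x \<subseteq> ND p (checks p) x"
    using assms(3) by (auto simp: ND_def)
  then have "card (ND p Cu x) \<le> card (ND p (checks p) x)"
    by (simp add: card_mono finite_ND)
  then show ?thesis
    using card_variable_neighbours[OF assms(1,2)] by simp
qed

lemma CCS_eq_card_ND:
  assumes "0 < p" and "Cu \<subseteq> checks p"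
  shows "CCS p Cu = {x \<in> vars p. 0 < card (ND p Cu x) \<and> card (ND p Cu x) < 3}"
proof (intro set_eqI)
  fix x
  show "x \<in> CCS p Cu \<longleftrightarrow> x \<in> {x \<in> vars p. 0 < card (ND p Cu x) \<and> card (ND p Cu x) < 3}"
  proof (cases "x \<in> vars p")
    case True
    have sub: "ND p Cu x \<subseteq> ND p (checks p) x"
      using assms(2) by (auto simp: ND_def)
    have fin: "finite (ND p (checks p) x)"
      by (simp add: finite_ND)
    have "ND p (checks p - Cu) x = ND p (checks p) x - ND p Cu x"
      by (auto simp: ND_def)
    then have "ND p (checks p - Cu) x = {} \<longleftrightarrow> ND p Cu x = ND p (checks p) x"
      using sub by blast
    also have "\<dots> \<longleftrightarrow> card (ND p Cu x) = 3"
      using card_subset_eq[OF fin sub] card_variable_neighbours[OF assms(1) True] by auto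
    finally have "ND p (checks p - Cu) x \<noteq> {} \<longleftrightarrow> card (ND p Cu x) < 3"
      using card_ND_le_3[OF assms(1) True assms(2)] by linarith
    moreover have "x \<in> NV p Cu \<longleftrightarrow> ND p Cu x \<noteq> {}"
      using True by (auto simp: NV_def ND_def)
    ultimately show ?thesis
      using True finite_subset[OF sub fin] by (auto simp: CCS_def card_gt_0_iff)
  qed (simp add: CCS_def NV_def)
qed

lemma sum_card_ND:
  assumes "Cu \<subseteq> checks p"
  shows "(\<Sum>x\<in>vars p. card (ND p Cu x)) = card Cu * p"
proof -
  have "finite Cu"
    using assms by (rule finite_subset) simp
  have "(\<Sum>x\<in>vars p. card (ND p Cu x)) = (\<Sum>x\<in>vars p. card {c \<in> Cu. adj p c x})"
    by (simp add: ND_def)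
  also have "\<dots> = (\<Sum>c\<in>Cu. card {x \<in> vars p. adj p c x})"
    using finite_vars \<open>finite Cu\<close> by (rule sum_card_filter_swap)
  also have "\<dots> = (\<Sum>c\<in>Cu. p)"
    using assms by (intro sum.cong refl card_check_neighbours) blast
  finally show ?thesis
    by simp
qed

lemma sum_card_ND_pairs:
  assumes "prime p" and "3 \<le> p" and "Cu \<subseteq> checks p"
  shows "(\<Sum>x\<in>vars p. card (ND p Cu x) * (card (ND p Cu x) - 1)) = card (row_crossing_pairs Cu)"
proof -
  let ?R = "row_crossing_pairs Cu"
  have "finite Cu"
    using assms(3) by (rule finite_subset) simp
  then have "finite ?R"
    by (rule rev_finite_subset[OF finite_cartesian_product[OF _ \<open>finite Cu\<close>]])
      (auto simp: row_crossing_pairs_def)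
  have pairs: "card (ND p Cu x) * (card (ND p Cu x) - 1)
      = card {q \<in> ?R. adj p (fst q) x \<and> adj p (snd q) x}" for x
  proof -
    have "{q \<in> ?R. adj p (fst q) x \<and> adj p (snd q) x} = ND p Cu x \<times> ND p Cu x - Id_on (ND p Cu x)"
      by (auto simp: row_crossing_pairs_def ND_def dest: adj_unique_in_row)
    moreover have "finite (ND p Cu x)"
      using \<open>finite Cu\<close> by (rule finite_ND)
    ultimately show ?thesis
      by (simp add: card_Times_Diff_Id_on)
  qed
  have "(\<Sum>x\<in>vars p. card (ND p Cu x) * (card (ND p Cu x) - 1))
      = (\<Sum>x\<in>vars p. card {q \<in> ?R. adj p (fst q) x \<and> adj p (snd q) x})"
    by (simp only: pairs)
  also have "\<dots> = (\<Sum>q\<in>?R. card {x \<in> vars p. adj p (fst q) x \<and> adj p (snd q) x})"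
    using finite_vars \<open>finite ?R\<close> by (rule sum_card_filter_swap)
  also have "\<dots> = (\<Sum>q\<in>?R. 1)"
    using assms by (intro sum.cong refl card_common_neighbours) (auto simp: row_crossing_pairs_def)
  finally show ?thesis
    by simp
qed

lemma card_CCS_row_crossing_pairs:
  assumes "prime p" and "3 \<le> p" and "Cu \<subseteq> checks p"
  shows "2 * card (CCS p Cu) + card (row_crossing_pairs Cu) = 2 * (card Cu * p)"
proof -
  let ?k = "\<lambda>x. card (ND p Cu x)"
  have "0 < p"
    using assms(2) by simp
  have degree_identity: "2 * of_bool (0 < k \<and> k < 3) + k * (k - 1) = 2 * k" if "k \<le> 3" for k :: nat
  proof -
    have "k \<in> {0, 1, 2, 3}"
      using that by auto
    then show ?thesis
      by auto
  qed
  have "2 * card (CCS p Cu) = (\<Sum>x\<in>vars p. 2 * of_bool (0 < ?k x \<and> ?k x < 3))"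
    by (simp add: CCS_eq_card_ND[OF \<open>0 < p\<close> assms(3)] sum_distrib_left[symmetric] Int_def)
  then have "2 * card (CCS p Cu) + card (row_crossing_pairs Cu)
      = (\<Sum>x\<in>vars p. 2 * of_bool (0 < ?k x \<and> ?k x < 3) + ?k x * (?k x - 1))"
    using sum_card_ND_pairs[OF assms] by (simp add: sum.distrib)
  also have "\<dots> = (\<Sum>x\<in>vars p. 2 * ?k x)"
    using card_ND_le_3[OF \<open>0 < p\<close> _ assms(3)] by (intro sum.cong refl degree_identity)
  also have "\<dots> = 2 * (card Cu * p)"
    by (simp add: sum_distrib_left[symmetric] sum_card_ND[OF assms(3)])
  finally show ?thesis .
qed

lemma cycle6_other_rows:
  assumes "cycle6 p c c2 c3"
  shows "fst c \<noteq> fst c2" and "fst c \<noteq> fst c3" and "c2 \<noteq> c3"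
proof -
  obtain v1 v3 where "adj p c v1" "adj p c2 v1" "adj p c3 v3" "adj p c v3"
    and "c \<noteq> c2" "c2 \<noteq> c3" "c \<noteq> c3"
    using assms unfolding cycle6_def by blast
  then show "fst c \<noteq> fst c2" and "fst c \<noteq> fst c3" and "c2 \<noteq> c3"
    by (auto dest: adj_unique_in_row)
qed

lemma card_row_crossing_pairs_ge_cycle6:
  assumes "finite Cu" and "\<forall>c \<in> Cu. \<exists>c2 \<in> Cu. \<exists>c3 \<in> Cu. cycle6 p c c2 c3"
  shows "2 * card Cu \<le> card (row_crossing_pairs Cu)"
proof -
  have "2 \<le> card {c' \<in> Cu. fst c \<noteq> fst c'}" if "c \<in> Cu" for c
  proof -
    obtain c2 c3 where "c2 \<in> Cu" "c3 \<in> Cu" "cycle6 p c c2 c3"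
      using assms(2) \<open>c \<in> Cu\<close> by blast
    then have "{c2, c3} \<subseteq> {c' \<in> Cu. fst c \<noteq> fst c'}" and "c2 \<noteq> c3"
      using cycle6_other_rows by auto
    then show ?thesis
      using assms(1) card_mono[of "{c' \<in> Cu. fst c \<noteq> fst c'}" "{c2, c3}"] by simp
  qed
  then have "(\<Sum>c\<in>Cu. 2) \<le> (\<Sum>c\<in>Cu. card {c' \<in> Cu. fst c \<noteq> fst c'})"
    by (rule sum_mono)
  then show ?thesis
    using assms(1) by (simp add: card_row_crossing_pairs mult.commute)
qed

lemma lower_bound_from_pair_count:
  fixes w q z p :: nat
  assumes "2 * w + q = 2 * (z * p)" and "q \<le> z * (z - 1)" and "z \<le> p"
  shows "((1 + 2 * real p) * real z - (real z)^2) / 4 \<le> real w"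
proof -
  have "real q \<le> real z * real z - real z"
    using of_nat_mono[OF assms(2)] by (cases z) (simp_all add: algebra_simps)
  moreover have "real z * real z \<le> real z * real p"
    using assms(3) by (intro mult_left_mono) simp_all
  ultimately show ?thesis
    using arg_cong[OF assms(1), of real] by (simp add: power2_eq_square algebra_simps)
qed

theorem theorem2:
  fixes p z :: nat and Cu :: "(nat \<times> nat) set"
  assumes "prime p" and "p \<ge> 3"
    and "Cu \<subseteq> checks p" and "card Cu = z" and "1 \<le> z" and "z \<le> p"
  shows "real (card (CCS p Cu)) \<ge> ((1 + 2 * real p) * real z - (real z)^2) / 4
    \<and> ((\<exists>r. \<forall>c \<in> Cu. fst c = r) \<longrightarrow> card (CCS p Cu) = z * p)
    \<and> (3 \<le> z \<and> z < p \<and> (\<forall>c \<in> Cu. \<exists>c2 \<in> Cu. \<exists>c3 \<in> Cu. cycle6 p c c2 c3)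
           \<longrightarrow> card (CCS p Cu) \<le> z * p - z)"
proof -
  have "finite Cu"
    using assms(3) by (rule finite_subset) simp
  have count: "2 * card (CCS p Cu) + card (row_crossing_pairs Cu) = 2 * (z * p)"
    using card_CCS_row_crossing_pairs[OF assms(1-3)] assms(4) by simp
  have "((1 + 2 * real p) * real z - (real z)^2) / 4 \<le> real (card (CCS p Cu))"
    using lower_bound_from_pair_count[OF count _ assms(6)] card_row_crossing_pairs_le[OF \<open>finite Cu\<close>]
      assms(4) by simp
  moreover have "card (CCS p Cu) = z * p" if "\<exists>r. \<forall>c \<in> Cu. fst c = r"
    using that count row_crossing_pairs_single_row by fastforce
  moreover have "card (CCS p Cu) \<le> z * p - z" if "\<forall>c \<in> Cu. \<exists>c2 \<in> Cu. \<exists>c3 \<in> Cu. cycle6 p c c2 c3"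
    using card_row_crossing_pairs_ge_cycle6[OF \<open>finite Cu\<close> that] count assms(4) by simp
  ultimately show ?thesis
    by blast
qed

end
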